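(* Let $\mathcal{X}=L^p$ for some $p\in\{0,1,\infty\}$ and let $\varphi$ be a dynamic LM-measure on $\mathcal{X}$. The following are equivalent: (1) $\varphi$ is weakly acceptance time consistent, i.e. for all $X\in\mathcal{X}$, $s,t\in\mathbb{T}$ with $s>t$, and $m_s\in\bar L^0_s$: $\varphi_s(X)\ge m_s\Rightarrow \varphi_t(X)\ge\operatorname{Essinf}_t(m_s)$; (2) for all $X\in\mathcal{X}$ and $s>t$: $\varphi_t(X)\ge\operatorname{Essinf}_t\varphi_s(X)$; (3) for all $X\in\mathcal{X}$, $s>t$ and $m_t\in\bar L^0_t$: $\varphi_s(X)\ge m_t\Rightarrow\varphi_t(X)\ge m_t$. If in addition $\varphi$ is a dynamic monetary utility measure, these are also equivalent to: (4) for all $X\in\mathcal{X}$ and $s>t$: $\varphi_s(X)\ge0\Rightarrow\varphi_t(X)\ge0$. Analogously, the following are equivalent: (1') $\varphi$ is weakly rejection time consistent, i.e. $\varphi_s(X)\le m_s\Rightarrow\varphi_t(X)\le\operatorname{Esssup}_t(m_s)$ for all $X$, $s>t$, $m_s\in\bar L^0_s$; (2') $\varphi_t(X)\le\operatorname{Esssup}_t\varphi_s(X)$ for all $X$, $s>t$; (3') $\varphi_s(X)\le m_t\Rightarrow\varphi_t(X)\le m_t$ for all $X$, $s>t$, $m_t\in\bar L^0_t$; and, if $\varphi$ is a dynamic monetary utility measure, also (4') $\varphi_s(X)\le0\Rightarrow\varphi_t(X)\le0$ for all $X$, $s>t$.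
   Context: Let $(\Omega,\mathcal{F},\{\mathcal{F}_t\}_{t\in\mathbb{T}},P)$ be a filtered probability space, $\mathbb{T}=\{0,1,\dots,T\}$, $\mathcal{F}_0$ trivial. $\bar L^0_t$ denotes $\mathcal{F}_t$-measurable random variables with values in $[-\infty,\infty]$; $L^p_t=L^p(\Omega,\mathcal{F}_t,P)$, $L^p=L^p_T$, ordered pointwise a.s. Conventions: $\infty-\infty=-\infty$, $0\cdot\pm\infty=0$. A dynamic LM-measure is a family $\{\varphi_t\}_{t\in\mathbb{T}}$ of maps $\varphi_t:\mathcal{X}\to\bar L^0_t$ with $1_A\varphi_t(X)=1_A\varphi_t(1_AX)$ for all $A\in\mathcal{F}_t$ and $X\le Y\Rightarrow\varphi_t(X)\le\varphi_t(Y)$. A dynamic monetary utility measure is a dynamic LM-measure with $\varphi_t(0)=0$ and $\varphi_t(X+c_t)=\varphi_t(X)+c_t$ for all $t\in\mathbb{T}$, $X\in\mathcal{X}$, $c_t\in L^\infty_t$. For bounded $X$, $\operatorname{Essinf}_tX$ is the largest $\mathcal{F}_t$-measurable random variable a.s. dominated by $X$ (equivalently the unique $\mathcal{F}_t$-measurable $U$ with $\operatorname{essinf}_{A}X=\operatorname{essinf}_{A}U$ for all $A\in\mathcal{F}_t$), and $\operatorname{Esssup}_tX=-\operatorname{Essinf}_t(-X)$; for $X\in\bar L^0_T$ set $\operatorname{Essinf}_tX:=\lim_{n}\operatorname{Essinf}_t(X^+\wedge n)-\lim_n\operatorname{Esssup}_t(X^-\wedge n)$ and $\operatorname{Esssup}_tX:=-\operatorname{Essinf}_t(-X)$,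 where $X^+=X\vee0$, $X^-=(-X)\vee0$. *)

theory Defs
  imports "HOL-Probability.Probability"
begin

definition filtration :: "'a measure \<Rightarrow> (nat \<Rightarrow> 'a measure) \<Rightarrow> nat \<Rightarrow> bool" where
  "filtration M F T \<longleftrightarrow>
     (\<forall>t\<le>T. subalgebra M (F t)) \<and>
     (\<forall>s t. s \<le> t \<longrightarrow> t \<le> T \<longrightarrow> sets (F s) \<subseteq> sets (F t)) \<and>
     sets (F 0) = {{}, space M}"

definition ereal_minus_conv :: "ereal \<Rightarrow> ereal \<Rightarrow> ereal" where
  "ereal_minus_conv a b = (if a = \<infinity> \<and> b = \<infinity> then -\<infinity> else a - b)"

definition is_Essinf :: "'a measure \<Rightarrow> (nat \<Rightarrow> 'a measure) \<Rightarrow> nat \<Rightarrow> ('a \<Rightarrow> ereal) \<Rightarrow> ('a \<Rightarrow> ereal) \<Rightarrow> bool" where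
  "is_Essinf M F t X U \<longleftrightarrow>
     U \<in> borel_measurable (F t) \<and> (AE \<omega> in M. U \<omega> \<le> X \<omega>) \<and>
     (\<forall>V \<in> borel_measurable (F t). (AE \<omega> in M. V \<omega> \<le> X \<omega>) \<longrightarrow> (AE \<omega> in M. V \<omega> \<le> U \<omega>))"

text \<open>Essinf for bounded random variables.\<close>
definition Essinf_bdd :: "'a measure \<Rightarrow> (nat \<Rightarrow> 'a measure) \<Rightarrow> nat \<Rightarrow> ('a \<Rightarrow> ereal) \<Rightarrow> ('a \<Rightarrow> ereal)" where
  "Essinf_bdd M F t X = (SOME U. is_Essinf M F t X U)"

definition Esssup_bdd :: "'a measure \<Rightarrow> (nat \<Rightarrow> 'a measure) \<Rightarrow> nat \<Rightarrow> ('a \<Rightarrow> ereal) \<Rightarrow> ('a \<Rightarrow> ereal)" where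
  "Esssup_bdd M F t X = (\<lambda>\<omega>. - Essinf_bdd M F t (\<lambda>x. - X x) \<omega>)"

definition Essinf :: "'a measure \<Rightarrow> (nat \<Rightarrow> 'a measure) \<Rightarrow> nat \<Rightarrow> ('a \<Rightarrow> ereal) \<Rightarrow> ('a \<Rightarrow> ereal)" where
  "Essinf M F t X = (\<lambda>\<omega>.
     ereal_minus_conv
       (lim (\<lambda>n::nat. Essinf_bdd M F t (\<lambda>x. min (max (X x) 0) (ereal (real n))) \<omega>))
       (lim (\<lambda>n::nat. Esssup_bdd M F t (\<lambda>x. min (max (- X x) 0) (ereal (real n))) \<omega>)))"

definition Esssup :: "'a measure \<Rightarrow> (nat \<Rightarrow> 'a measure) \<Rightarrow> nat \<Rightarrow> ('a \<Rightarrow> ereal) \<Rightarrow> ('a \<Rightarrow> ereal)" where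
  "Esssup M F t X = (\<lambda>\<omega>. - Essinf M F t (\<lambda>x. - X x) \<omega>)"

datatype Lexp = L0 | L1 | Linf

definition ess_bounded :: "'a measure \<Rightarrow> ('a \<Rightarrow> real) \<Rightarrow> bool" where
  "ess_bounded M X \<longleftrightarrow> (\<exists>C. AE \<omega> in M. \<bar>X \<omega>\<bar> \<le> C)"

definition Lspace :: "Lexp \<Rightarrow> 'a measure \<Rightarrow> 'a measure \<Rightarrow> ('a \<Rightarrow> real) set" where
  "Lspace p M N = {X. X \<in> borel_measurable N \<and>
      (case p of L0 \<Rightarrow> True | L1 \<Rightarrow> integrable M X | Linf \<Rightarrow> ess_bounded M X)}"

definition dynamic_LM_measure ::
  "'a measure \<Rightarrow> (nat \<Rightarrow> 'a measure) \<Rightarrow> nat \<Rightarrow> ('a \<Rightarrow> real) set \<Rightarrow>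
   (nat \<Rightarrow> ('a \<Rightarrow> real) \<Rightarrow> ('a \<Rightarrow> ereal)) \<Rightarrow> bool" where
  "dynamic_LM_measure M F T Xs phi \<longleftrightarrow>
     (\<forall>t\<le>T. \<forall>X\<in>Xs. phi t X \<in> borel_measurable (F t)) \<and>
     (\<forall>t\<le>T. \<forall>A\<in>sets (F t). \<forall>X\<in>Xs.
        AE \<omega> in M. ereal (indicator A \<omega>) * phi t X \<omega>
                   = ereal (indicator A \<omega>) * phi t (\<lambda>x. indicator A x * X x) \<omega>) \<and>
     (\<forall>t\<le>T. \<forall>X\<in>Xs. \<forall>Y\<in>Xs. (AE \<omega> in M. X \<omega> \<le> Y \<omega>) \<longrightarrow> (AE \<omega> in M. phi t X \<omega> \<le> phi t Y \<omega>))"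

definition dynamic_monetary_utility_measure ::
  "'a measure \<Rightarrow> (nat \<Rightarrow> 'a measure) \<Rightarrow> nat \<Rightarrow> ('a \<Rightarrow> real) set \<Rightarrow>
   (nat \<Rightarrow> ('a \<Rightarrow> real) \<Rightarrow> ('a \<Rightarrow> ereal)) \<Rightarrow> bool" where
  "dynamic_monetary_utility_measure M F T Xs phi \<longleftrightarrow>
     dynamic_LM_measure M F T Xs phi \<and>
     (\<forall>t\<le>T. AE \<omega> in M. phi t (\<lambda>x. 0) \<omega> = 0) \<and>
     (\<forall>t\<le>T. \<forall>X\<in>Xs. \<forall>c \<in> Lspace Linf M (F t).
        AE \<omega> in M. phi t (\<lambda>x. X x + c x) \<omega> = phi t X \<omega> + ereal (c \<omega>))"

definition weakly_acceptance_tc ::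
  "'a measure \<Rightarrow> (nat \<Rightarrow> 'a measure) \<Rightarrow> nat \<Rightarrow> ('a \<Rightarrow> real) set \<Rightarrow>
   (nat \<Rightarrow> ('a \<Rightarrow> real) \<Rightarrow> ('a \<Rightarrow> ereal)) \<Rightarrow> bool" where
  "weakly_acceptance_tc M F T Xs phi \<longleftrightarrow>
     (\<forall>X\<in>Xs. \<forall>s t. t < s \<longrightarrow> s \<le> T \<longrightarrow> (\<forall>m \<in> borel_measurable (F s).
        (AE \<omega> in M. phi s X \<omega> \<ge> m \<omega>) \<longrightarrow> (AE \<omega> in M. phi t X \<omega> \<ge> Essinf M F t m \<omega>)))"

definition weakly_rejection_tc ::
  "'a measure \<Rightarrow> (nat \<Rightarrow> 'a measure) \<Rightarrow> nat \<Rightarrow> ('a \<Rightarrow> real) set \<Rightarrow>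
   (nat \<Rightarrow> ('a \<Rightarrow> real) \<Rightarrow> ('a \<Rightarrow> ereal)) \<Rightarrow> bool" where
  "weakly_rejection_tc M F T Xs phi \<longleftrightarrow>
     (\<forall>X\<in>Xs. \<forall>s t. t < s \<longrightarrow> s \<le> T \<longrightarrow> (\<forall>m \<in> borel_measurable (F s).
        (AE \<omega> in M. phi s X \<omega> \<le> m \<omega>) \<longrightarrow> (AE \<omega> in M. phi t X \<omega> \<le> Esssup M F t m \<omega>)))"

end

theory Submission
  imports Defs
begin

text \<open>
  For a bounded variable the conditional essential infimum exists: it is the maximiser of the
  expectation among bounded \<open>F t\<close>-measurable a.s. minorants, a family closed under countable
  suprema. Passing to monotone limits of truncations, the general \<open>Essinf\<close> is again the largest
  \<open>F t\<close>-measurable a.s. minorant. This makes (1), (2), (3) equivalent: \<open>Essinf\<close> is monotone, it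
  dominates every \<open>F t\<close>-measurable minorant, and \<open>Essinf (phi s X)\<close> is itself an admissible bound
  in (3). For a monetary measure, (4) gives (3) by translating \<open>X\<close> by the bounded level
  \<open>min m n\<close> on \<open>{m \<ge> -n}\<close> (locality makes the measure vanish off that set) and letting
  \<open>n \<rightarrow> \<infinity>\<close>. The rejection statements are the acceptance statements for the dual measure
  \<open>X \<mapsto> - phi (- X)\<close>, which is again a (monetary) LM-measure on \<open>L\<^sup>p\<close>.
\<close>

definition bounded_minorants ::
  "'a measure \<Rightarrow> 'a measure \<Rightarrow> real \<Rightarrow> real \<Rightarrow> ('a \<Rightarrow> ereal) \<Rightarrow> ('a \<Rightarrow> real) set" where
  "bounded_minorants M N a b X = {f \<in> borel_measurable N.
     (\<forall>\<omega>\<in>space M. a \<le> f \<omega> \<and> f \<omega> \<le> b) \<and> (AE \<omega> in M. ereal (f \<omega>) \<le> X \<omega>)}"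

lemma bounded_minorants_max:
  assumes "f \<in> bounded_minorants M N a b X" "g \<in> bounded_minorants M N a b X"
  shows "(\<lambda>\<omega>. max (f \<omega>) (g \<omega>)) \<in> bounded_minorants M N a b X"
proof -
  have "AE \<omega> in M. ereal (f \<omega>) \<le> X \<omega> \<and> ereal (g \<omega>) \<le> X \<omega>"
    using assms by (auto simp: bounded_minorants_def)
  then show ?thesis
    using assms by (auto simp: bounded_minorants_def elim!: eventually_mono)
qed

lemma bounded_minorants_SUP:
  assumes sub: "subalgebra M N" and f: "\<And>k::nat. f k \<in> bounded_minorants M N a b X"
  shows "(\<lambda>\<omega>. SUP k. f k \<omega>) \<in> bounded_minorants M N a b X"
proof -
  have fb: "a \<le> f k \<omega> \<and> f k \<omega> \<le> b" if "\<omega> \<in> space M" for k \<omega>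
    using f that by (auto simp: bounded_minorants_def)
  then have bdd: "bdd_above (range (\<lambda>k. f k \<omega>))" if "\<omega> \<in> space M" for \<omega>
    using that by (auto simp: bdd_above_def)
  have "(\<lambda>\<omega>. SUP k. f k \<omega>) \<in> borel_measurable N"
    using f bdd sub by (intro borel_measurable_cSUP) (auto simp: bounded_minorants_def subalgebra_def)
  moreover have "a \<le> (SUP k. f k \<omega>) \<and> (SUP k. f k \<omega>) \<le> b" if "\<omega> \<in> space M" for \<omega>
    using fb[OF that] cSUP_upper[OF _ bdd[OF that], of 0] by (auto intro: order.trans cSUP_least)
  moreover have "AE \<omega> in M. ereal (SUP k. f k \<omega>) \<le> X \<omega>"
  proof -
    have "AE \<omega> in M. \<forall>k. ereal (f k \<omega>) \<le> X \<omega>"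
      using f by (auto simp: bounded_minorants_def AE_all_countable)
    with AE_space show ?thesis
    proof eventually_elim
      case (elim \<omega>)
      then show ?case
        by (cases "X \<omega>") (auto intro: cSUP_least)
    qed
  qed
  ultimately show ?thesis
    by (simp add: bounded_minorants_def)
qed

context
  fixes M N :: "'a measure"
  assumes prob: "prob_space M" and sub: "subalgebra M N"
begin

lemma bounded_minorants_integrable:
  assumes "f \<in> bounded_minorants M N a b X"
  shows "integrable M f"
proof -
  interpret prob_space M by (fact prob)
  show ?thesis
  proof (rule integrable_const_bound[where B="\<bar>a\<bar> + \<bar>b\<bar>"])
    show "AE \<omega> in M. norm (f \<omega>) \<le> \<bar>a\<bar> + \<bar>b\<bar>"
      using assms by (intro AE_I2) (auto simp: bounded_minorants_def abs_le_iff)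
    show "f \<in> borel_measurable M"
      using assms measurable_from_subalg[OF sub] by (auto simp: bounded_minorants_def)
  qed
qed

lemma bounded_minorants_integral_maximiser:
  assumes "a \<le> b" "AE \<omega> in M. ereal a \<le> X \<omega>"
  obtains g where "g \<in> bounded_minorants M N a b X"
    "\<And>f. f \<in> bounded_minorants M N a b X \<Longrightarrow> integral\<^sup>L M f \<le> integral\<^sup>L M g"
proof -
  interpret prob_space M by (fact prob)
  let ?B = "bounded_minorants M N a b X"
  define s where "s = (SUP f\<in>?B. integral\<^sup>L M f)"
  have "(\<lambda>_. a) \<in> ?B"
    using assms by (simp add: bounded_minorants_def)
  then have B_ne: "?B \<noteq> {}" by blast
  have "integral\<^sup>L M f \<le> b" if "f \<in> ?B" for f
    using integral_mono[OF bounded_minorants_integrable[OF that], of "\<lambda>_. b"] that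
    by (simp add: bounded_minorants_def prob_space)
  then have bdd: "bdd_above (integral\<^sup>L M ` ?B)"
    by (auto simp: bdd_above_def)
  have "\<exists>f\<in>?B. s - 1 / Suc k < integral\<^sup>L M f" for k :: nat
    using less_cSUP_iff[OF B_ne bdd, of "s - 1 / Suc k"] by (simp add: s_def)
  then obtain f where f: "\<And>k. f k \<in> ?B" and f_int: "\<And>k. s - 1 / Suc k < integral\<^sup>L M (f k)"
    by metis
  define g where "g \<omega> = (SUP k. f k \<omega>)" for \<omega>
  have g: "g \<in> ?B"
    unfolding g_def by (rule bounded_minorants_SUP[OF sub f])
  have f_le_g: "integral\<^sup>L M (f k) \<le> integral\<^sup>L M g" for k
  proof (rule integral_mono[OF bounded_minorants_integrable[OF f] bounded_minorants_integrable[OF g]])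
    fix \<omega> assume "\<omega> \<in> space M"
    then have "bdd_above (range (\<lambda>k. f k \<omega>))"
      using f by (force simp: bounded_minorants_def intro: bdd_aboveI2)
    then show "f k \<omega> \<le> g \<omega>"
      unfolding g_def by (rule cSUP_upper2) auto
  qed
  have "s - 1 / Suc k < integral\<^sup>L M g" for k
    using f_int[of k] f_le_g[of k] by linarith
  moreover have "(\<lambda>k. s - inverse (real (Suc k))) \<longlonglongrightarrow> s"
    using tendsto_diff[OF tendsto_const LIMSEQ_inverse_real_of_nat] by simp
  ultimately have "s \<le> integral\<^sup>L M g"
    by (intro LIMSEQ_le_const2[where X="\<lambda>k. s - inverse (real (Suc k))"]) (auto simp: field_simps less_imp_le)
  moreover have "integral\<^sup>L M f \<le> s" if "f \<in> ?B" for f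
    unfolding s_def using bdd that by (rule cSUP_upper2) simp
  ultimately show thesis
    using g that by fastforce
qed

lemma bounded_minorants_AE_le_maximiser:
  assumes g: "g \<in> bounded_minorants M N a b X"
    and g_max: "\<And>f. f \<in> bounded_minorants M N a b X \<Longrightarrow> integral\<^sup>L M f \<le> integral\<^sup>L M g"
    and f: "f \<in> bounded_minorants M N a b X"
  shows "AE \<omega> in M. f \<omega> \<le> g \<omega>"
proof -
  define h where "h \<omega> = max (f \<omega>) (g \<omega>)" for \<omega>
  have h: "h \<in> bounded_minorants M N a b X"
    unfolding h_def by (rule bounded_minorants_max[OF f g])
  note int_g = bounded_minorants_integrable[OF g] and int_h = bounded_minorants_integrable[OF h]
  have "integral\<^sup>L M g \<le> integral\<^sup>L M h"
    by (rule integral_mono[OF int_g int_h]) (simp add: h_def)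
  then have "integral\<^sup>L M (\<lambda>\<omega>. h \<omega> - g \<omega>) = 0"
    using g_max[OF h] by (simp add: Bochner_Integration.integral_diff[OF int_h int_g])
  moreover have "AE \<omega> in M. 0 \<le> h \<omega> - g \<omega>"
    by (simp add: h_def)
  ultimately have "AE \<omega> in M. h \<omega> - g \<omega> = 0"
    using integral_nonneg_eq_0_iff_AE[OF Bochner_Integration.integrable_diff[OF int_h int_g]] by simp
  then show ?thesis
    by (auto simp: h_def elim!: eventually_mono)
qed

end

lemma is_Essinf_exists:
  assumes "prob_space M" "subalgebra M (F t)" "a \<le> b"
    and bounds: "AE \<omega> in M. ereal a \<le> X \<omega> \<and> X \<omega> \<le> ereal b"
  shows "\<exists>U. is_Essinf M F t X U"
proof -
  let ?B = "bounded_minorants M (F t) a b X"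
  obtain g where g: "g \<in> ?B" and g_max: "\<And>f. f \<in> ?B \<Longrightarrow> integral\<^sup>L M f \<le> integral\<^sup>L M g"
    using bounded_minorants_integral_maximiser[OF assms(1-3)] bounds by (auto elim: eventually_mono)
  have "AE \<omega> in M. V \<omega> \<le> ereal (g \<omega>)"
    if V: "V \<in> borel_measurable (F t)" and V_le: "AE \<omega> in M. V \<omega> \<le> X \<omega>" for V
  proof -
    define clamp where "clamp \<omega> = real_of_ereal (max (min (V \<omega>) (ereal b)) (ereal a))" for \<omega>
    have "clamp \<in> borel_measurable (F t)"
      unfolding clamp_def using V by measurable
    moreover have "a \<le> clamp \<omega> \<and> clamp \<omega> \<le> b" for \<omega>
      using \<open>a \<le> b\<close> by (cases "V \<omega>") (auto simp: clamp_def min_def max_def)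
    moreover have "AE \<omega> in M. ereal (clamp \<omega>) \<le> X \<omega>"
      using V_le bounds
    proof eventually_elim
      case (elim \<omega>)
      then show ?case
        by (cases "V \<omega>"; cases "X \<omega>") (auto simp: clamp_def min_def max_def)
    qed
    ultimately have "clamp \<in> ?B"
      by (simp add: bounded_minorants_def)
    with bounded_minorants_AE_le_maximiser[OF assms(1,2) g g_max]
    have clamp_le: "AE \<omega> in M. clamp \<omega> \<le> g \<omega>" by blast
    have V_le_clamp: "V \<omega> \<le> ereal (clamp \<omega>)" if "V \<omega> \<le> ereal b" for \<omega>
      using that by (cases "V \<omega>") (auto simp: clamp_def min_def max_def)
    show ?thesis
      using clamp_le V_le bounds by eventually_elim (meson V_le_clamp ereal_less_eq(3) order.trans)
  qed
  then show ?thesis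
    using g unfolding is_Essinf_def bounded_minorants_def
    by (intro exI[of _ "\<lambda>\<omega>. ereal (g \<omega>)"]) auto
qed

lemma is_Essinf_mono:
  assumes "is_Essinf M F t X U" "is_Essinf M F t Y V" "AE \<omega> in M. X \<omega> \<le> Y \<omega>"
  shows "AE \<omega> in M. U \<omega> \<le> V \<omega>"
proof -
  have "AE \<omega> in M. U \<omega> \<le> Y \<omega>"
    using assms by (auto simp: is_Essinf_def elim: eventually_elim2 intro: order.trans)
  then show ?thesis
    using assms by (simp add: is_Essinf_def)
qed

lemma is_Essinf_greatest:
  "is_Essinf M F t X U \<Longrightarrow> V \<in> borel_measurable (F t) \<Longrightarrow> AE \<omega> in M. V \<omega> \<le> X \<omega> \<Longrightarrow>
    AE \<omega> in M. V \<omega> \<le> U \<omega>"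
  by (simp add: is_Essinf_def)

lemma ereal_minus_conv_mono:
  "a \<le> a' \<Longrightarrow> b' \<le> b \<Longrightarrow> ereal_minus_conv a b \<le> ereal_minus_conv a' b'"
  unfolding ereal_minus_conv_def by (cases a; cases b; cases a'; cases b') auto

lemma ereal_minus_conv_pos_neg_part: "ereal_minus_conv (max z 0) (max (- z) 0) = z"
  unfolding ereal_minus_conv_def by (cases z) (auto simp: max_def)

definition trunc_pos :: "nat \<Rightarrow> ereal \<Rightarrow> ereal" where
  "trunc_pos n z = min (max z 0) (ereal (real n))"

lemma borel_measurable_trunc_pos [measurable]:
  "f \<in> borel_measurable N \<Longrightarrow> (\<lambda>x. trunc_pos n (f x)) \<in> borel_measurable N"
  unfolding trunc_pos_def by measurable

lemma trunc_pos_bounds: "0 \<le> trunc_pos n z \<and> trunc_pos n z \<le> ereal (real n)"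
  by (simp add: trunc_pos_def)

lemma trunc_pos_mono: "z \<le> z' \<Longrightarrow> trunc_pos n z \<le> trunc_pos n z'"
  unfolding trunc_pos_def by (intro min.mono max.mono) auto

lemma trunc_pos_Suc: "trunc_pos n z \<le> trunc_pos (Suc n) z"
  unfolding trunc_pos_def by (intro min.mono) auto

lemma SUP_trunc_pos: "(SUP n. trunc_pos n z) = max z 0"
proof (rule antisym)
  show "(SUP n. trunc_pos n z) \<le> max z 0"
    by (rule SUP_least) (simp add: trunc_pos_def)
  show "max z 0 \<le> (SUP n. trunc_pos n z)"
  proof (cases "max z 0")
    case (real r)
    obtain n :: nat where "r \<le> real n"
      using real_arch_simple by blast
    then have "trunc_pos n z = max z 0"
      using real by (simp add: trunc_pos_def)
    then show ?thesis
      by (metis SUP_upper UNIV_I)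
  next
    case PInf
    then have "(SUP n. trunc_pos n z) = (SUP n. ereal (real n))"
      by (simp add: trunc_pos_def)
    then show ?thesis
      using PInf SUP_nat_Infty by simp
  qed simp
qed

lemma Essinf_trunc_pos:
  "Essinf M F t Z = (\<lambda>\<omega>. ereal_minus_conv
     (lim (\<lambda>n. Essinf_bdd M F t (\<lambda>x. trunc_pos n (Z x)) \<omega>))
     (lim (\<lambda>n. - Essinf_bdd M F t (\<lambda>x. - trunc_pos n (- Z x)) \<omega>)))"
  by (simp add: Essinf_def Esssup_bdd_def trunc_pos_def)

context
  fixes M :: "'a measure" and F :: "nat \<Rightarrow> 'a measure" and t :: nat
  assumes prob: "prob_space M" and sub: "subalgebra M (F t)"
begin

lemma is_Essinf_Essinf_bdd:
  assumes "a \<le> b" "AE \<omega> in M. ereal a \<le> X \<omega> \<and> X \<omega> \<le> ereal b"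
  shows "is_Essinf M F t X (Essinf_bdd M F t X)"
  unfolding Essinf_bdd_def using is_Essinf_exists[where F=F and t=t, OF prob sub assms] by (rule someI_ex)

lemma is_Essinf_truncations:
  shows "is_Essinf M F t (\<lambda>x. trunc_pos n (Z x)) (Essinf_bdd M F t (\<lambda>x. trunc_pos n (Z x)))"
    and "is_Essinf M F t (\<lambda>x. - trunc_pos n (- Z x)) (Essinf_bdd M F t (\<lambda>x. - trunc_pos n (- Z x)))"
proof -
  show "is_Essinf M F t (\<lambda>x. trunc_pos n (Z x)) (Essinf_bdd M F t (\<lambda>x. trunc_pos n (Z x)))"
    by (rule is_Essinf_Essinf_bdd[of 0 "real n"]) (simp_all add: AE_I2 trunc_pos_bounds zero_ereal_def[symmetric])
  show "is_Essinf M F t (\<lambda>x. - trunc_pos n (- Z x)) (Essinf_bdd M F t (\<lambda>x. - trunc_pos n (- Z x)))"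
    by (rule is_Essinf_Essinf_bdd[of "- real n" 0])
      (simp_all add: AE_I2 trunc_pos_bounds zero_ereal_def[symmetric] flip: uminus_ereal.simps(1))
qed

lemma Essinf_AE_eq_SUP_truncations:
  fixes Z :: "'a \<Rightarrow> ereal"
  defines "U n \<equiv> Essinf_bdd M F t (\<lambda>x. trunc_pos n (Z x))"
    and "L n \<omega> \<equiv> - Essinf_bdd M F t (\<lambda>x. - trunc_pos n (- Z x)) \<omega>"
  shows "AE \<omega> in M. Essinf M F t Z \<omega> = ereal_minus_conv (SUP n. U n \<omega>) (SUP n. L n \<omega>)
    \<and> (\<forall>n. U n \<omega> \<le> trunc_pos n (Z \<omega>) \<and> trunc_pos n (- Z \<omega>) \<le> L n \<omega>)"
proof -
  note is_U = is_Essinf_truncations(1) and is_L = is_Essinf_truncations(2)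
  have "AE \<omega> in M. \<forall>n. U n \<omega> \<le> U (Suc n) \<omega> \<and> L n \<omega> \<le> L (Suc n) \<omega>
      \<and> U n \<omega> \<le> trunc_pos n (Z \<omega>) \<and> trunc_pos n (- Z \<omega>) \<le> L n \<omega>"
    unfolding AE_all_countable
  proof
    fix n
    have "AE \<omega> in M. U n \<omega> \<le> U (Suc n) \<omega>"
      unfolding U_def by (rule is_Essinf_mono[OF is_U is_U]) (simp add: trunc_pos_Suc)
    moreover have "AE \<omega> in M. - L (Suc n) \<omega> \<le> - L n \<omega>"
      unfolding L_def by (simp, rule is_Essinf_mono[OF is_L is_L]) (simp add: trunc_pos_Suc)
    moreover have "AE \<omega> in M. U n \<omega> \<le> trunc_pos n (Z \<omega>)"
      using is_U by (simp add: U_def is_Essinf_def)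
    moreover have "AE \<omega> in M. - L n \<omega> \<le> - trunc_pos n (- Z \<omega>)"
      using is_L by (simp add: L_def is_Essinf_def)
    ultimately show "AE \<omega> in M. U n \<omega> \<le> U (Suc n) \<omega> \<and> L n \<omega> \<le> L (Suc n) \<omega>
      \<and> U n \<omega> \<le> trunc_pos n (Z \<omega>) \<and> trunc_pos n (- Z \<omega>) \<le> L n \<omega>"
      by eventually_elim simp
  qed
  then show ?thesis
  proof eventually_elim
    case (elim \<omega>)
    have "lim (\<lambda>n. U n \<omega>) = (SUP n. U n \<omega>)" "lim (\<lambda>n. L n \<omega>) = (SUP n. L n \<omega>)"
      using elim by (auto intro!: limI LIMSEQ_SUP incseq_SucI)
    then show ?case
      using elim by (simp add: Essinf_trunc_pos U_def L_def)
  qed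
qed

lemma borel_measurable_Essinf: "Essinf M F t Z \<in> borel_measurable (F t)"
proof -
  have [measurable]: "Essinf_bdd M F t (\<lambda>x. trunc_pos n (Z x)) \<in> borel_measurable (F t)"
    "Essinf_bdd M F t (\<lambda>x. - trunc_pos n (- Z x)) \<in> borel_measurable (F t)" for n
    using is_Essinf_truncations by (simp_all add: is_Essinf_def)
  show ?thesis
    unfolding Essinf_trunc_pos ereal_minus_conv_def by measurable
qed

lemma Essinf_AE_le: "AE \<omega> in M. Essinf M F t Z \<omega> \<le> Z \<omega>"
proof -
  define U where "U n = Essinf_bdd M F t (\<lambda>x. trunc_pos n (Z x))" for n
  define L where "L n \<omega> = - Essinf_bdd M F t (\<lambda>x. - trunc_pos n (- Z x)) \<omega>" for n \<omega>
  show ?thesis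
    using Essinf_AE_eq_SUP_truncations[of Z, folded U_def L_def]
  proof eventually_elim
    case (elim \<omega>)
    have "(SUP n. U n \<omega>) \<le> max (Z \<omega>) 0"
      using elim unfolding SUP_trunc_pos[symmetric] by (intro SUP_mono') simp
    moreover have "max (- Z \<omega>) 0 \<le> (SUP n. L n \<omega>)"
      using elim unfolding SUP_trunc_pos[symmetric] by (intro SUP_mono') simp
    ultimately show ?case
      using elim ereal_minus_conv_mono ereal_minus_conv_pos_neg_part by metis
  qed
qed

lemma Essinf_AE_greatest:
  assumes V: "V \<in> borel_measurable (F t)" and V_le: "AE \<omega> in M. V \<omega> \<le> Z \<omega>"
  shows "AE \<omega> in M. V \<omega> \<le> Essinf M F t Z \<omega>"
proof -
  define U where "U n = Essinf_bdd M F t (\<lambda>x. trunc_pos n (Z x))" for n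
  define L where "L n \<omega> = - Essinf_bdd M F t (\<lambda>x. - trunc_pos n (- Z x)) \<omega>" for n \<omega>
  have "AE \<omega> in M. \<forall>n. trunc_pos n (V \<omega>) \<le> U n \<omega> \<and> L n \<omega> \<le> trunc_pos n (- V \<omega>)"
    unfolding AE_all_countable
  proof
    fix n
    have "AE \<omega> in M. trunc_pos n (V \<omega>) \<le> U n \<omega>"
      unfolding U_def using V V_le
      by (intro is_Essinf_greatest[OF is_Essinf_truncations(1)]) (auto elim!: eventually_mono intro: trunc_pos_mono)
    moreover have "AE \<omega> in M. - trunc_pos n (- V \<omega>) \<le> - L n \<omega>"
      unfolding L_def ereal_uminus_uminus using V V_le
      by (intro is_Essinf_greatest[OF is_Essinf_truncations(2)]) (auto elim!: eventually_mono intro: trunc_pos_mono)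
    ultimately show "AE \<omega> in M. trunc_pos n (V \<omega>) \<le> U n \<omega> \<and> L n \<omega> \<le> trunc_pos n (- V \<omega>)"
      by eventually_elim simp
  qed
  with Essinf_AE_eq_SUP_truncations[of Z, folded U_def L_def] show ?thesis
  proof eventually_elim
    case (elim \<omega>)
    have "max (V \<omega>) 0 \<le> (SUP n. U n \<omega>)"
      using elim unfolding SUP_trunc_pos[symmetric] by (intro SUP_mono') auto
    moreover have "(SUP n. L n \<omega>) \<le> max (- V \<omega>) 0"
      using elim unfolding SUP_trunc_pos[symmetric] by (intro SUP_mono') auto
    ultimately show ?case
      using elim ereal_minus_conv_mono ereal_minus_conv_pos_neg_part by metis
  qed
qed

theorem is_Essinf_Essinf: "is_Essinf M F t Z (Essinf M F t Z)"
  using borel_measurable_Essinf Essinf_AE_le Essinf_AE_greatest by (simp add: is_Essinf_def)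

end

lemma filtration_subalgebra: "filtration M F T \<Longrightarrow> t \<le> T \<Longrightarrow> subalgebra M (F t)"
  by (simp add: filtration_def)

lemma filtration_mono: "filtration M F T \<Longrightarrow> s \<le> t \<Longrightarrow> t \<le> T \<Longrightarrow> sets (F s) \<subseteq> sets (F t)"
  by (simp add: filtration_def)

lemma is_Essinf_Essinf_filtration:
  "prob_space M \<Longrightarrow> filtration M F T \<Longrightarrow> t \<le> T \<Longrightarrow> is_Essinf M F t Z (Essinf M F t Z)"
  using is_Essinf_Essinf[of M F t] filtration_subalgebra by blast

text \<open>Conditions (2), (3), (4) of the proposition; (2'), (3'), (4') are the \<open>rejection_tc_\<close> ones below.\<close>

definition acceptance_tc_Essinf ::
  "'a measure \<Rightarrow> (nat \<Rightarrow> 'a measure) \<Rightarrow> nat \<Rightarrow> ('a \<Rightarrow> real) set \<Rightarrow> (nat \<Rightarrow> ('a \<Rightarrow> real) \<Rightarrow> 'a \<Rightarrow> ereal) \<Rightarrow> bool" where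
  "acceptance_tc_Essinf M F T Xs phi \<longleftrightarrow> (\<forall>X\<in>Xs. \<forall>s t. t < s \<longrightarrow> s \<le> T \<longrightarrow>
     (AE \<omega> in M. phi t X \<omega> \<ge> Essinf M F t (phi s X) \<omega>))"

definition acceptance_tc_Ft ::
  "'a measure \<Rightarrow> (nat \<Rightarrow> 'a measure) \<Rightarrow> nat \<Rightarrow> ('a \<Rightarrow> real) set \<Rightarrow> (nat \<Rightarrow> ('a \<Rightarrow> real) \<Rightarrow> 'a \<Rightarrow> ereal) \<Rightarrow> bool" where
  "acceptance_tc_Ft M F T Xs phi \<longleftrightarrow> (\<forall>X\<in>Xs. \<forall>s t. t < s \<longrightarrow> s \<le> T \<longrightarrow>
     (\<forall>m \<in> borel_measurable (F t). (AE \<omega> in M. phi s X \<omega> \<ge> m \<omega>) \<longrightarrow> (AE \<omega> in M. phi t X \<omega> \<ge> m \<omega>)))"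

definition acceptance_tc_zero ::
  "'a measure \<Rightarrow> nat \<Rightarrow> ('a \<Rightarrow> real) set \<Rightarrow> (nat \<Rightarrow> ('a \<Rightarrow> real) \<Rightarrow> 'a \<Rightarrow> ereal) \<Rightarrow> bool" where
  "acceptance_tc_zero M T Xs phi \<longleftrightarrow> (\<forall>X\<in>Xs. \<forall>s t. t < s \<longrightarrow> s \<le> T \<longrightarrow>
     (AE \<omega> in M. phi s X \<omega> \<ge> 0) \<longrightarrow> (AE \<omega> in M. phi t X \<omega> \<ge> 0))"

context
  fixes M :: "'a measure" and F :: "nat \<Rightarrow> 'a measure" and T :: nat
    and Xs :: "('a \<Rightarrow> real) set" and phi :: "nat \<Rightarrow> ('a \<Rightarrow> real) \<Rightarrow> 'a \<Rightarrow> ereal"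
  assumes prob: "prob_space M" and filt: "filtration M F T"
    and adapted: "\<And>X s. X \<in> Xs \<Longrightarrow> s \<le> T \<Longrightarrow> phi s X \<in> borel_measurable (F s)"
begin

lemma weakly_acceptance_tc_iff_Essinf:
  "weakly_acceptance_tc M F T Xs phi \<longleftrightarrow> acceptance_tc_Essinf M F T Xs phi"
  unfolding weakly_acceptance_tc_def acceptance_tc_Essinf_def
proof (intro iffI ballI allI impI)
  fix X s t
  assume "\<forall>X\<in>Xs. \<forall>s t. t < s \<longrightarrow> s \<le> T \<longrightarrow> (\<forall>m\<in>borel_measurable (F s).
    (AE \<omega> in M. m \<omega> \<le> phi s X \<omega>) \<longrightarrow> (AE \<omega> in M. Essinf M F t m \<omega> \<le> phi t X \<omega>))"
    and "X \<in> Xs" "t < s" "s \<le> T"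
  then show "AE \<omega> in M. Essinf M F t (phi s X) \<omega> \<le> phi t X \<omega>"
    using adapted by simp
next
  fix X s t m
  assume Essinf_le: "\<forall>X\<in>Xs. \<forall>s t. t < s \<longrightarrow> s \<le> T \<longrightarrow>
      (AE \<omega> in M. Essinf M F t (phi s X) \<omega> \<le> phi t X \<omega>)"
    and X: "X \<in> Xs" and ts: "t < s" "s \<le> T" and "AE \<omega> in M. m \<omega> \<le> phi s X \<omega>"
  then have "AE \<omega> in M. Essinf M F t m \<omega> \<le> Essinf M F t (phi s X) \<omega>"
    by (intro is_Essinf_mono[OF is_Essinf_Essinf_filtration[OF prob filt]
          is_Essinf_Essinf_filtration[OF prob filt]]) simp_all
  moreover have "AE \<omega> in M. Essinf M F t (phi s X) \<omega> \<le> phi t X \<omega>"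
    using Essinf_le X ts by blast
  ultimately show "AE \<omega> in M. Essinf M F t m \<omega> \<le> phi t X \<omega>"
    by eventually_elim (rule order.trans)
qed

lemma acceptance_tc_Essinf_iff_Ft:
  "acceptance_tc_Essinf M F T Xs phi \<longleftrightarrow> acceptance_tc_Ft M F T Xs phi"
  unfolding acceptance_tc_Essinf_def acceptance_tc_Ft_def
proof (intro iffI ballI allI impI)
  fix X s t m
  assume Essinf_le: "\<forall>X\<in>Xs. \<forall>s t. t < s \<longrightarrow> s \<le> T \<longrightarrow>
      (AE \<omega> in M. Essinf M F t (phi s X) \<omega> \<le> phi t X \<omega>)"
    and X: "X \<in> Xs" and ts: "t < s" "s \<le> T" and m: "m \<in> borel_measurable (F t)"
    and "AE \<omega> in M. m \<omega> \<le> phi s X \<omega>"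
  then have "AE \<omega> in M. m \<omega> \<le> Essinf M F t (phi s X) \<omega>"
    by (intro is_Essinf_greatest[OF is_Essinf_Essinf_filtration[OF prob filt]]) simp_all
  moreover have "AE \<omega> in M. Essinf M F t (phi s X) \<omega> \<le> phi t X \<omega>"
    using Essinf_le X ts by blast
  ultimately show "AE \<omega> in M. m \<omega> \<le> phi t X \<omega>"
    by eventually_elim (rule order.trans)
next
  fix X s t
  assume Ft: "\<forall>X\<in>Xs. \<forall>s t. t < s \<longrightarrow> s \<le> T \<longrightarrow> (\<forall>m\<in>borel_measurable (F t).
      (AE \<omega> in M. m \<omega> \<le> phi s X \<omega>) \<longrightarrow> (AE \<omega> in M. m \<omega> \<le> phi t X \<omega>))"
    and X: "X \<in> Xs" and ts: "t < s" "s \<le> T"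
  have "is_Essinf M F t (phi s X) (Essinf M F t (phi s X))"
    using ts by (intro is_Essinf_Essinf_filtration[OF prob filt]) simp
  with Ft X ts show "AE \<omega> in M. Essinf M F t (phi s X) \<omega> \<le> phi t X \<omega>"
    by (simp add: is_Essinf_def)
qed

end

lemma Lspace_uminus: "X \<in> Lspace p M N \<Longrightarrow> (\<lambda>x. - X x) \<in> Lspace p M N"
  unfolding Lspace_def ess_bounded_def by (cases p) auto

lemma Lspace_subalgebra:
  assumes "subalgebra N N'" "X \<in> Lspace p M N'"
  shows "X \<in> Lspace p M N"
  using assms measurable_from_subalg unfolding Lspace_def by blast

lemma Lspace_mult_indicator:
  assumes sub: "subalgebra M N" and A [measurable]: "A \<in> sets N" and X: "X \<in> Lspace p M N"
  shows "(\<lambda>x. indicator A x * X x) \<in> Lspace p M N"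
proof -
  have [measurable]: "X \<in> borel_measurable N"
    using X by (simp add: Lspace_def)
  have "A \<in> sets M"
    using sub A by (auto simp: subalgebra_def)
  then have "integrable M X \<Longrightarrow> integrable M (\<lambda>x. indicator A x * X x)"
    using integrable_mult_indicator[of A M X] by simp
  moreover have "(\<lambda>x. indicator A x * X x) \<in> borel_measurable N"
    by measurable
  moreover have "AE \<omega> in M. \<bar>indicator A \<omega> * X \<omega>\<bar> \<le> C" if "AE \<omega> in M. \<bar>X \<omega>\<bar> \<le> C" for C
    using that by eventually_elim (auto simp: indicator_def)
  ultimately show ?thesis
    using X by (cases p) (auto simp: Lspace_def ess_bounded_def)
qed

lemma Lspace_add_Linf:
  assumes "prob_space M" and sub: "subalgebra M N" and X: "X \<in> Lspace p M N" and c: "c \<in> Lspace Linf M N"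
  shows "(\<lambda>x. X x + c x) \<in> Lspace p M N"
proof -
  interpret prob_space M by fact
  have [measurable]: "X \<in> borel_measurable N" "c \<in> borel_measurable N"
    using X c by (simp_all add: Lspace_def)
  obtain C where C: "AE \<omega> in M. \<bar>c \<omega>\<bar> \<le> C"
    using c by (auto simp: Lspace_def ess_bounded_def)
  have "c \<in> borel_measurable M"
    by (rule measurable_from_subalg[OF sub]) measurable
  with C have "integrable M c"
    by (intro integrable_const_bound[of _ C]) auto
  moreover have "(\<lambda>x. X x + c x) \<in> borel_measurable N"
    by measurable
  moreover have "AE \<omega> in M. \<bar>X \<omega> + c \<omega>\<bar> \<le> D + C" if "AE \<omega> in M. \<bar>X \<omega>\<bar> \<le> D" for D
    using that C by eventually_elim auto
  ultimately show ?thesis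
    using X by (cases p) (auto simp: Lspace_def ess_bounded_def)
qed

lemma Lspace_filtration_mono:
  assumes "filtration M F T" "t \<le> s" "s \<le> T" "c \<in> Lspace p M (F t)"
  shows "c \<in> Lspace p M (F s)"
proof (rule Lspace_subalgebra[OF _ assms(4)])
  have "space (F t) = space M" "space (F s) = space M"
    using assms filtration_subalgebra[OF assms(1)] by (simp_all add: subalgebra_def)
  then show "subalgebra (F s) (F t)"
    using filtration_mono[OF assms(1-3)] by (simp add: subalgebra_def)
qed

lemma dynamic_LM_measure_adapted:
  "dynamic_LM_measure M F T Xs phi \<Longrightarrow> X \<in> Xs \<Longrightarrow> s \<le> T \<Longrightarrow> phi s X \<in> borel_measurable (F s)"
  by (simp add: dynamic_LM_measure_def)

lemma dynamic_LM_measure_local: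
  assumes "dynamic_LM_measure M F T Xs phi" "u \<le> T" "A \<in> sets (F u)" "X \<in> Xs"
  shows "AE \<omega> in M. \<omega> \<in> A \<longrightarrow> phi u X \<omega> = phi u (\<lambda>x. indicator A x * X x) \<omega>"
proof -
  have "AE \<omega> in M. ereal (indicator A \<omega>) * phi u X \<omega>
      = ereal (indicator A \<omega>) * phi u (\<lambda>x. indicator A x * X x) \<omega>"
    using assms unfolding dynamic_LM_measure_def by blast
  then show ?thesis
    by (rule eventually_mono) (auto simp: one_ereal_def[symmetric])
qed

lemma dynamic_monetary_utility_measure_translation:
  assumes "dynamic_monetary_utility_measure M F T Xs phi" "u \<le> T" "X \<in> Xs" "c \<in> Lspace Linf M (F u)"
  shows "AE \<omega> in M. phi u (\<lambda>x. X x + c x) \<omega> = phi u X \<omega> + ereal (c \<omega>)"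
  using assms by (simp add: dynamic_monetary_utility_measure_def)

lemma dynamic_monetary_utility_measure_vanishes_outside:
  assumes monetary: "dynamic_monetary_utility_measure M F T Xs phi"
    and sub: "subalgebra M (F u)" and u: "u \<le> T" and A: "A \<in> sets (F u)"
    and Y: "Y \<in> Xs" and Y_zero: "\<And>x. x \<notin> A \<Longrightarrow> Y x = 0"
  shows "AE \<omega> in M. \<omega> \<notin> A \<longrightarrow> phi u Y \<omega> = 0"
proof -
  have LM: "dynamic_LM_measure M F T Xs phi"
    using monetary by (simp add: dynamic_monetary_utility_measure_def)
  have "space M - A \<in> sets (F u)"
    using sets.compl_sets[OF A] sub by (simp add: subalgebra_def)
  moreover have "(\<lambda>x. indicator (space M - A) x * Y x) = (\<lambda>x. 0)"
    using Y_zero by (auto split: split_indicator)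
  ultimately have "AE \<omega> in M. \<omega> \<in> space M - A \<longrightarrow> phi u Y \<omega> = phi u (\<lambda>x. 0) \<omega>"
    using dynamic_LM_measure_local[OF LM u _ Y] by metis
  with AE_space show ?thesis
    using monetary u by (auto simp: dynamic_monetary_utility_measure_def elim: eventually_elim2)
qed

lemma ereal_le_by_truncations:
  fixes m y :: ereal
  assumes "\<And>n::nat. ereal (- real n) \<le> m \<Longrightarrow> min m (ereal (real n)) \<le> y"
  shows "m \<le> y"
proof (cases m)
  case (real r)
  obtain n :: nat where "\<bar>r\<bar> \<le> real n"
    using real_arch_simple by blast
  then show ?thesis
    using assms[of n] real by simp
next
  case PInf
  show ?thesis
  proof (cases y)
    case (real q)
    obtain n :: nat where "q < real n"
      using reals_Archimedean2 by blast
    then show ?thesis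
      using assms[of n] PInf real by simp
  qed (use assms[of 0] PInf in simp_all)
qed simp

context
  fixes M :: "'a measure" and F :: "nat \<Rightarrow> 'a measure" and T :: nat and p :: Lexp
    and phi :: "nat \<Rightarrow> ('a \<Rightarrow> real) \<Rightarrow> 'a \<Rightarrow> ereal"
  assumes prob: "prob_space M" and filt: "filtration M F T"
    and monetary: "dynamic_monetary_utility_measure M F T (Lspace p M (F T)) phi"
    and zero: "acceptance_tc_zero M T (Lspace p M (F T)) phi"
begin

lemma acceptance_tc_zero_lower_bound:
  assumes ts: "t < s" "s \<le> T" and Y: "Y \<in> Lspace p M (F T)" and d: "d \<in> Lspace Linf M (F t)"
    and d_le: "AE \<omega> in M. d \<omega> \<le> phi s Y \<omega>"
  shows "AE \<omega> in M. d \<omega> \<le> phi t Y \<omega>"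
proof -
  have d_u: "(\<lambda>x. - d x) \<in> Lspace Linf M (F u)" if "t \<le> u" "u \<le> T" for u
    using Lspace_filtration_mono[OF filt that] Lspace_uminus[OF d] by blast
  have Yd: "(\<lambda>x. Y x + - d x) \<in> Lspace p M (F T)"
    using Lspace_add_Linf[OF prob filtration_subalgebra[OF filt] Y d_u] ts by simp
  have "AE \<omega> in M. 0 \<le> phi s (\<lambda>x. Y x + - d x) \<omega>"
    using dynamic_monetary_utility_measure_translation[OF monetary ts(2) Y d_u[OF less_imp_le[OF ts(1)] ts(2)]] d_le
  proof eventually_elim
    case (elim \<omega>)
    then show ?case
      by (cases "phi s Y \<omega>") auto
  qed
  then have "AE \<omega> in M. 0 \<le> phi t (\<lambda>x. Y x + - d x) \<omega>"
    using zero Yd ts unfolding acceptance_tc_zero_def by blast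
  moreover have "AE \<omega> in M. phi t (\<lambda>x. Y x + - d x) \<omega> = phi t Y \<omega> + ereal (- d \<omega>)"
    using dynamic_monetary_utility_measure_translation[OF monetary _ Y d_u] ts by simp
  ultimately show ?thesis
  proof eventually_elim
    case (elim \<omega>)
    then show ?case
      by (cases "phi t Y \<omega>") auto
  qed
qed

lemma acceptance_tc_zero_lower_bound_on:
  assumes ts: "t < s" "s \<le> T" and X: "X \<in> Lspace p M (F T)"
    and A: "A \<in> sets (F t)" and c: "c \<in> Lspace Linf M (F t)"
    and c_le: "AE \<omega> in M. \<omega> \<in> A \<longrightarrow> c \<omega> \<le> phi s X \<omega>"
  shows "AE \<omega> in M. \<omega> \<in> A \<longrightarrow> c \<omega> \<le> phi t X \<omega>"
proof -
  have LM: "dynamic_LM_measure M F T (Lspace p M (F T)) phi"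
    using monetary by (simp add: dynamic_monetary_utility_measure_def)
  have sub_T: "subalgebra M (F T)" and sub_t: "subalgebra M (F t)"
    using filt ts by (simp_all add: filtration_subalgebra)
  have A_s: "A \<in> sets (F s)" and A_T: "A \<in> sets (F T)"
    using A filtration_mono[OF filt, of t s] filtration_mono[OF filt, of t T] ts by auto
  define Y where "Y x = indicator A x * X x" for x
  define d where "d x = indicator A x * c x" for x
  have Y: "Y \<in> Lspace p M (F T)"
    unfolding Y_def by (rule Lspace_mult_indicator[OF sub_T A_T X])
  have d: "d \<in> Lspace Linf M (F t)"
    unfolding d_def by (rule Lspace_mult_indicator[OF sub_t A c])
  have "AE \<omega> in M. \<omega> \<notin> A \<longrightarrow> phi s Y \<omega> = 0"
    using filtration_subalgebra[OF filt ts(2)] Y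
    by (intro dynamic_monetary_utility_measure_vanishes_outside[OF monetary _ ts(2) A_s]) (auto simp: Y_def)
  moreover have "AE \<omega> in M. \<omega> \<in> A \<longrightarrow> phi s X \<omega> = phi s Y \<omega>"
    unfolding Y_def by (rule dynamic_LM_measure_local[OF LM ts(2) A_s X])
  ultimately have "AE \<omega> in M. d \<omega> \<le> phi s Y \<omega>"
    using c_le by eventually_elim (auto simp: d_def split: split_indicator)
  from acceptance_tc_zero_lower_bound[OF ts Y d this]
  have "AE \<omega> in M. d \<omega> \<le> phi t Y \<omega>" .
  moreover have "AE \<omega> in M. \<omega> \<in> A \<longrightarrow> phi t X \<omega> = phi t Y \<omega>"
    unfolding Y_def using ts by (intro dynamic_LM_measure_local[OF LM _ A X]) simp
  ultimately show ?thesis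
    by eventually_elim (auto simp: d_def split: split_indicator)
qed

text \<open>The level \<open>m\<close> may be unbounded, so it is only transferred where \<open>- n \<le> m\<close>, capped at \<open>n\<close>.\<close>

lemma acceptance_tc_zero_truncated_lower_bound:
  assumes ts: "t < s" "s \<le> T" and X: "X \<in> Lspace p M (F T)"
    and m [measurable]: "m \<in> borel_measurable (F t)" and m_le: "AE \<omega> in M. m \<omega> \<le> phi s X \<omega>"
  shows "AE \<omega> in M. ereal (- real n) \<le> m \<omega> \<longrightarrow> min (m \<omega>) (ereal (real n)) \<le> phi t X \<omega>"
proof -
  have space_t: "space (F t) = space M"
    using filtration_subalgebra[OF filt] ts by (simp add: subalgebra_def)
  define A where "A = {\<omega> \<in> space M. ereal (- real n) \<le> m \<omega>}"
  define c where "c \<omega> = real_of_ereal (max (min (m \<omega>) (ereal (real n))) (ereal (- real n)))" for \<omega>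
  have A: "A \<in> sets (F t)"
    unfolding A_def space_t[symmetric] by measurable
  have c_A: "ereal (c \<omega>) = min (m \<omega>) (ereal (real n))" if "\<omega> \<in> A" for \<omega>
    using that by (cases "m \<omega>") (auto simp: A_def c_def min_def max_def)
  have "c \<in> borel_measurable (F t)"
    unfolding c_def by measurable
  moreover have "\<bar>c \<omega>\<bar> \<le> real n" for \<omega>
    by (cases "m \<omega>") (auto simp: c_def min_def max_def)
  ultimately have c: "c \<in> Lspace Linf M (F t)"
    by (auto simp: Lspace_def ess_bounded_def)
  have "AE \<omega> in M. \<omega> \<in> A \<longrightarrow> c \<omega> \<le> phi s X \<omega>"
    using m_le by eventually_elim (auto simp: c_A intro: min.coboundedI1)
  from acceptance_tc_zero_lower_bound_on[OF ts X A c this] AE_space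
  show ?thesis
    by eventually_elim (auto simp: A_def c_A)
qed

lemma acceptance_tc_zero_imp_Ft: "acceptance_tc_Ft M F T (Lspace p M (F T)) phi"
  unfolding acceptance_tc_Ft_def
proof (intro ballI allI impI)
  fix X s t m
  assume "X \<in> Lspace p M (F T)" "t < s" "s \<le> T" "m \<in> borel_measurable (F t)"
    "AE \<omega> in M. m \<omega> \<le> phi s X \<omega>"
  then have "AE \<omega> in M. \<forall>n::nat. ereal (- real n) \<le> m \<omega> \<longrightarrow> min (m \<omega>) (ereal (real n)) \<le> phi t X \<omega>"
    unfolding AE_all_countable by (blast intro: acceptance_tc_zero_truncated_lower_bound)
  then show "AE \<omega> in M. m \<omega> \<le> phi t X \<omega>"
    by eventually_elim (rule ereal_le_by_truncations, blast)
qed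

end

lemma acceptance_tc_Ft_imp_zero:
  "acceptance_tc_Ft M F T Xs phi \<Longrightarrow> acceptance_tc_zero M T Xs phi"
  unfolding acceptance_tc_Ft_def acceptance_tc_zero_def
  by (intro ballI allI impI) (auto dest!: bspec spec[of _ "\<lambda>_. 0"])

definition rejection_tc_Esssup ::
  "'a measure \<Rightarrow> (nat \<Rightarrow> 'a measure) \<Rightarrow> nat \<Rightarrow> ('a \<Rightarrow> real) set \<Rightarrow> (nat \<Rightarrow> ('a \<Rightarrow> real) \<Rightarrow> 'a \<Rightarrow> ereal) \<Rightarrow> bool" where
  "rejection_tc_Esssup M F T Xs phi \<longleftrightarrow> (\<forall>X\<in>Xs. \<forall>s t. t < s \<longrightarrow> s \<le> T \<longrightarrow>
     (AE \<omega> in M. phi t X \<omega> \<le> Esssup M F t (phi s X) \<omega>))"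

definition rejection_tc_Ft ::
  "'a measure \<Rightarrow> (nat \<Rightarrow> 'a measure) \<Rightarrow> nat \<Rightarrow> ('a \<Rightarrow> real) set \<Rightarrow> (nat \<Rightarrow> ('a \<Rightarrow> real) \<Rightarrow> 'a \<Rightarrow> ereal) \<Rightarrow> bool" where
  "rejection_tc_Ft M F T Xs phi \<longleftrightarrow> (\<forall>X\<in>Xs. \<forall>s t. t < s \<longrightarrow> s \<le> T \<longrightarrow>
     (\<forall>m \<in> borel_measurable (F t). (AE \<omega> in M. phi s X \<omega> \<le> m \<omega>) \<longrightarrow> (AE \<omega> in M. phi t X \<omega> \<le> m \<omega>)))"

definition rejection_tc_zero ::
  "'a measure \<Rightarrow> nat \<Rightarrow> ('a \<Rightarrow> real) set \<Rightarrow> (nat \<Rightarrow> ('a \<Rightarrow> real) \<Rightarrow> 'a \<Rightarrow> ereal) \<Rightarrow> bool" where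
  "rejection_tc_zero M T Xs phi \<longleftrightarrow> (\<forall>X\<in>Xs. \<forall>s t. t < s \<longrightarrow> s \<le> T \<longrightarrow>
     (AE \<omega> in M. phi s X \<omega> \<le> 0) \<longrightarrow> (AE \<omega> in M. phi t X \<omega> \<le> 0))"

definition dual_measure ::
  "(nat \<Rightarrow> ('a \<Rightarrow> real) \<Rightarrow> 'a \<Rightarrow> ereal) \<Rightarrow> nat \<Rightarrow> ('a \<Rightarrow> real) \<Rightarrow> 'a \<Rightarrow> ereal" where
  "dual_measure phi u X = (\<lambda>\<omega>. - phi u (\<lambda>x. - X x) \<omega>)"

lemma ereal_le_uminus_iff: "a \<le> - b \<longleftrightarrow> b \<le> - (a::ereal)"
  by (metis ereal_minus_le_minus ereal_uminus_uminus)

lemma dual_measure_uminus: "dual_measure phi u (\<lambda>x. - X x) \<omega> = - phi u X \<omega>"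
  by (simp add: dual_measure_def)

context
  fixes M :: "'a measure" and F :: "nat \<Rightarrow> 'a measure" and T :: nat
    and Xs :: "('a \<Rightarrow> real) set" and phi :: "nat \<Rightarrow> ('a \<Rightarrow> real) \<Rightarrow> 'a \<Rightarrow> ereal"
  assumes uminus_closed: "\<forall>X\<in>Xs. (\<lambda>x. - X x) \<in> Xs"
begin

lemma weakly_rejection_tc_iff_dual:
  "weakly_rejection_tc M F T Xs phi \<longleftrightarrow> weakly_acceptance_tc M F T Xs (dual_measure phi)"
  unfolding weakly_rejection_tc_def weakly_acceptance_tc_def
proof (intro iffI ballI allI impI)
  fix X s t m
  assume R: "\<forall>X\<in>Xs. \<forall>s t. t < s \<longrightarrow> s \<le> T \<longrightarrow> (\<forall>m\<in>borel_measurable (F s).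
      (AE \<omega> in M. phi s X \<omega> \<le> m \<omega>) \<longrightarrow> (AE \<omega> in M. phi t X \<omega> \<le> Esssup M F t m \<omega>))"
    and X: "X \<in> Xs" and ts: "t < s" "s \<le> T" and m: "m \<in> borel_measurable (F s)"
    and "AE \<omega> in M. m \<omega> \<le> dual_measure phi s X \<omega>"
  then have "AE \<omega> in M. phi s (\<lambda>x. - X x) \<omega> \<le> - m \<omega>"
    by (simp add: dual_measure_def ereal_le_uminus_iff)
  with R uminus_closed[rule_format, OF X] ts m
  have "AE \<omega> in M. phi t (\<lambda>x. - X x) \<omega> \<le> Esssup M F t (\<lambda>\<omega>. - m \<omega>) \<omega>"
    by simp
  then show "AE \<omega> in M. Essinf M F t m \<omega> \<le> dual_measure phi t X \<omega>"
    by (simp add: dual_measure_def Esssup_def ereal_le_uminus_iff)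
next
  fix X s t m
  assume A: "\<forall>X\<in>Xs. \<forall>s t. t < s \<longrightarrow> s \<le> T \<longrightarrow> (\<forall>m\<in>borel_measurable (F s).
      (AE \<omega> in M. m \<omega> \<le> dual_measure phi s X \<omega>) \<longrightarrow>
      (AE \<omega> in M. Essinf M F t m \<omega> \<le> dual_measure phi t X \<omega>))"
    and X: "X \<in> Xs" and ts: "t < s" "s \<le> T" and m: "m \<in> borel_measurable (F s)"
    and "AE \<omega> in M. phi s X \<omega> \<le> m \<omega>"
  then have "AE \<omega> in M. - m \<omega> \<le> dual_measure phi s (\<lambda>x. - X x) \<omega>"
    by (simp add: dual_measure_uminus)
  with A uminus_closed[rule_format, OF X] ts m
  have "AE \<omega> in M. Essinf M F t (\<lambda>\<omega>. - m \<omega>) \<omega> \<le> dual_measure phi t (\<lambda>x. - X x) \<omega>"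
    by simp
  then show "AE \<omega> in M. phi t X \<omega> \<le> Esssup M F t m \<omega>"
    by (simp add: dual_measure_uminus Esssup_def ereal_le_uminus_iff)
qed

lemma rejection_tc_Esssup_iff_dual:
  "rejection_tc_Esssup M F T Xs phi \<longleftrightarrow> acceptance_tc_Essinf M F T Xs (dual_measure phi)"
  unfolding rejection_tc_Esssup_def acceptance_tc_Essinf_def
proof (intro iffI ballI allI impI)
  fix X s t
  assume "\<forall>X\<in>Xs. \<forall>s t. t < s \<longrightarrow> s \<le> T \<longrightarrow> (AE \<omega> in M. phi t X \<omega> \<le> Esssup M F t (phi s X) \<omega>)"
    and "X \<in> Xs" "t < s" "s \<le> T"
  then have "AE \<omega> in M. phi t (\<lambda>x. - X x) \<omega> \<le> Esssup M F t (phi s (\<lambda>x. - X x)) \<omega>"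
    using uminus_closed by blast
  then show "AE \<omega> in M. Essinf M F t (dual_measure phi s X) \<omega> \<le> dual_measure phi t X \<omega>"
    by (simp add: dual_measure_def Esssup_def ereal_le_uminus_iff)
next
  fix X s t
  assume "\<forall>X\<in>Xs. \<forall>s t. t < s \<longrightarrow> s \<le> T \<longrightarrow>
      (AE \<omega> in M. Essinf M F t (dual_measure phi s X) \<omega> \<le> dual_measure phi t X \<omega>)"
    and "X \<in> Xs" "t < s" "s \<le> T"
  then have "AE \<omega> in M. Essinf M F t (dual_measure phi s (\<lambda>x. - X x)) \<omega>
      \<le> dual_measure phi t (\<lambda>x. - X x) \<omega>"
    using uminus_closed by blast
  then show "AE \<omega> in M. phi t X \<omega> \<le> Esssup M F t (phi s X) \<omega>"
    by (simp add: dual_measure_def Esssup_def ereal_le_uminus_iff)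
qed

lemma rejection_tc_Ft_iff_dual:
  "rejection_tc_Ft M F T Xs phi \<longleftrightarrow> acceptance_tc_Ft M F T Xs (dual_measure phi)"
  unfolding rejection_tc_Ft_def acceptance_tc_Ft_def
proof (intro iffI ballI allI impI)
  fix X s t m
  assume R: "\<forall>X\<in>Xs. \<forall>s t. t < s \<longrightarrow> s \<le> T \<longrightarrow> (\<forall>m\<in>borel_measurable (F t).
      (AE \<omega> in M. phi s X \<omega> \<le> m \<omega>) \<longrightarrow> (AE \<omega> in M. phi t X \<omega> \<le> m \<omega>))"
    and X: "X \<in> Xs" and ts: "t < s" "s \<le> T" and m: "m \<in> borel_measurable (F t)"
    and "AE \<omega> in M. m \<omega> \<le> dual_measure phi s X \<omega>"
  then have "AE \<omega> in M. phi s (\<lambda>x. - X x) \<omega> \<le> - m \<omega>"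
    by (simp add: dual_measure_def ereal_le_uminus_iff)
  with R uminus_closed[rule_format, OF X] ts m have "AE \<omega> in M. phi t (\<lambda>x. - X x) \<omega> \<le> - m \<omega>"
    by simp
  then show "AE \<omega> in M. m \<omega> \<le> dual_measure phi t X \<omega>"
    by (simp add: dual_measure_def ereal_le_uminus_iff)
next
  fix X s t m
  assume A: "\<forall>X\<in>Xs. \<forall>s t. t < s \<longrightarrow> s \<le> T \<longrightarrow> (\<forall>m\<in>borel_measurable (F t).
      (AE \<omega> in M. m \<omega> \<le> dual_measure phi s X \<omega>) \<longrightarrow> (AE \<omega> in M. m \<omega> \<le> dual_measure phi t X \<omega>))"
    and X: "X \<in> Xs" and ts: "t < s" "s \<le> T" and m: "m \<in> borel_measurable (F t)"
    and "AE \<omega> in M. phi s X \<omega> \<le> m \<omega>"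
  then have "AE \<omega> in M. - m \<omega> \<le> dual_measure phi s (\<lambda>x. - X x) \<omega>"
    by (simp add: dual_measure_uminus)
  with A uminus_closed[rule_format, OF X] ts m have "AE \<omega> in M. - m \<omega> \<le> dual_measure phi t (\<lambda>x. - X x) \<omega>"
    by simp
  then show "AE \<omega> in M. phi t X \<omega> \<le> m \<omega>"
    by (simp add: dual_measure_uminus)
qed

lemma rejection_tc_zero_iff_dual:
  "rejection_tc_zero M T Xs phi \<longleftrightarrow> acceptance_tc_zero M T Xs (dual_measure phi)"
  unfolding rejection_tc_zero_def acceptance_tc_zero_def
proof (intro iffI ballI allI impI)
  fix X s t
  assume "\<forall>X\<in>Xs. \<forall>s t. t < s \<longrightarrow> s \<le> T \<longrightarrow>
      (AE \<omega> in M. phi s X \<omega> \<le> 0) \<longrightarrow> (AE \<omega> in M. phi t X \<omega> \<le> 0)"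
    and "X \<in> Xs" "t < s" "s \<le> T" "AE \<omega> in M. 0 \<le> dual_measure phi s X \<omega>"
  then show "AE \<omega> in M. 0 \<le> dual_measure phi t X \<omega>"
    using uminus_closed by (simp add: dual_measure_def)
next
  fix X s t
  assume A: "\<forall>X\<in>Xs. \<forall>s t. t < s \<longrightarrow> s \<le> T \<longrightarrow>
      (AE \<omega> in M. 0 \<le> dual_measure phi s X \<omega>) \<longrightarrow> (AE \<omega> in M. 0 \<le> dual_measure phi t X \<omega>)"
    and X: "X \<in> Xs" and ts: "t < s" "s \<le> T" and "AE \<omega> in M. phi s X \<omega> \<le> 0"
  then have "AE \<omega> in M. 0 \<le> dual_measure phi s (\<lambda>x. - X x) \<omega>"
    by (simp add: dual_measure_uminus)
  with A uminus_closed[rule_format, OF X] ts have "AE \<omega> in M. 0 \<le> dual_measure phi t (\<lambda>x. - X x) \<omega>"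
    by blast
  then show "AE \<omega> in M. phi t X \<omega> \<le> 0"
    by (simp add: dual_measure_uminus)
qed

lemma dynamic_LM_measure_dual:
  assumes LM: "dynamic_LM_measure M F T Xs phi"
  shows "dynamic_LM_measure M F T Xs (dual_measure phi)"
  unfolding dynamic_LM_measure_def
proof (intro conjI ballI allI impI)
  fix t X assume "t \<le> T" "X \<in> Xs"
  then have "phi t (\<lambda>x. - X x) \<in> borel_measurable (F t)"
    using LM uminus_closed by (simp add: dynamic_LM_measure_def)
  then show "dual_measure phi t X \<in> borel_measurable (F t)"
    unfolding dual_measure_def by measurable
next
  fix t A X assume t: "t \<le> T" and A: "A \<in> sets (F t)" and X: "X \<in> Xs"
  have "\<forall>A\<in>sets (F t). \<forall>X\<in>Xs. AE \<omega> in M. ereal (indicator A \<omega>) * phi t X \<omega>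
      = ereal (indicator A \<omega>) * phi t (\<lambda>x. indicator A x * X x) \<omega>"
    using LM t by (simp add: dynamic_LM_measure_def)
  note local = this[rule_format, OF A uminus_closed[rule_format, OF X]]
  then show "AE \<omega> in M. ereal (indicator A \<omega>) * dual_measure phi t X \<omega>
      = ereal (indicator A \<omega>) * dual_measure phi t (\<lambda>x. indicator A x * X x) \<omega>"
    using local by (simp add: dual_measure_def)
next
  fix t X Y assume "t \<le> T" "X \<in> Xs" "Y \<in> Xs" "AE \<omega> in M. X \<omega> \<le> Y \<omega>"
  then have "AE \<omega> in M. phi t (\<lambda>x. - Y x) \<omega> \<le> phi t (\<lambda>x. - X x) \<omega>"
    using LM uminus_closed unfolding dynamic_LM_measure_def by (auto elim!: eventually_mono)
  then show "AE \<omega> in M. dual_measure phi t X \<omega> \<le> dual_measure phi t Y \<omega>"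
    by (simp add: dual_measure_def)
qed

lemma dynamic_monetary_utility_measure_dual:
  assumes monetary: "dynamic_monetary_utility_measure M F T Xs phi"
  shows "dynamic_monetary_utility_measure M F T Xs (dual_measure phi)"
  unfolding dynamic_monetary_utility_measure_def
proof (intro conjI ballI allI impI)
  show "dynamic_LM_measure M F T Xs (dual_measure phi)"
    using monetary by (simp add: dynamic_monetary_utility_measure_def dynamic_LM_measure_dual)
next
  fix t assume "t \<le> T"
  then show "AE \<omega> in M. dual_measure phi t (\<lambda>x. 0) \<omega> = 0"
    using monetary by (simp add: dynamic_monetary_utility_measure_def dual_measure_def)
next
  fix t X c assume t: "t \<le> T" and X: "X \<in> Xs" and c: "c \<in> Lspace Linf M (F t)"
  have "\<forall>X\<in>Xs. \<forall>c\<in>Lspace Linf M (F t).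
      AE \<omega> in M. phi t (\<lambda>x. X x + c x) \<omega> = phi t X \<omega> + ereal (c \<omega>)"
    using monetary t by (simp add: dynamic_monetary_utility_measure_def)
  from this[rule_format, OF uminus_closed[rule_format, OF X] Lspace_uminus[OF c]]
  show "AE \<omega> in M. dual_measure phi t (\<lambda>x. X x + c x) \<omega> = dual_measure phi t X \<omega> + ereal (c \<omega>)"
  proof eventually_elim
    case (elim \<omega>)
    then show ?case
      by (cases "phi t (\<lambda>x. - X x) \<omega>") (simp_all add: dual_measure_def)
  qed
qed

end

theorem proposition4p3:
  fixes M :: "'a measure" and F :: "nat \<Rightarrow> 'a measure" and T :: nat and p :: Lexp
    and phi :: "nat \<Rightarrow> ('a \<Rightarrow> real) \<Rightarrow> ('a \<Rightarrow> ereal)"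
  defines "Xs \<equiv> Lspace p M (F T)"
  assumes "prob_space M"
    and "filtration M F T"
    and LM: "dynamic_LM_measure M F T Xs phi"
  shows
    "(weakly_acceptance_tc M F T Xs phi \<longleftrightarrow>
        (\<forall>X\<in>Xs. \<forall>s t. t < s \<longrightarrow> s \<le> T \<longrightarrow>
           (AE \<omega> in M. phi t X \<omega> \<ge> Essinf M F t (phi s X) \<omega>))) \<and>
     (weakly_acceptance_tc M F T Xs phi \<longleftrightarrow>
        (\<forall>X\<in>Xs. \<forall>s t. t < s \<longrightarrow> s \<le> T \<longrightarrow> (\<forall>m \<in> borel_measurable (F t).
           (AE \<omega> in M. phi s X \<omega> \<ge> m \<omega>) \<longrightarrow> (AE \<omega> in M. phi t X \<omega> \<ge> m \<omega>)))) \<and>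
     (dynamic_monetary_utility_measure M F T Xs phi \<longrightarrow>
        (weakly_acceptance_tc M F T Xs phi \<longleftrightarrow>
          (\<forall>X\<in>Xs. \<forall>s t. t < s \<longrightarrow> s \<le> T \<longrightarrow>
             (AE \<omega> in M. phi s X \<omega> \<ge> 0) \<longrightarrow> (AE \<omega> in M. phi t X \<omega> \<ge> 0)))) \<and>
     (weakly_rejection_tc M F T Xs phi \<longleftrightarrow>
        (\<forall>X\<in>Xs. \<forall>s t. t < s \<longrightarrow> s \<le> T \<longrightarrow>
           (AE \<omega> in M. phi t X \<omega> \<le> Esssup M F t (phi s X) \<omega>))) \<and>
     (weakly_rejection_tc M F T Xs phi \<longleftrightarrow>
        (\<forall>X\<in>Xs. \<forall>s t. t < s \<longrightarrow> s \<le> T \<longrightarrow> (\<forall>m \<in> borel_measurable (F t).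
           (AE \<omega> in M. phi s X \<omega> \<le> m \<omega>) \<longrightarrow> (AE \<omega> in M. phi t X \<omega> \<le> m \<omega>)))) \<and>
     (dynamic_monetary_utility_measure M F T Xs phi \<longrightarrow>
        (weakly_rejection_tc M F T Xs phi \<longleftrightarrow>
          (\<forall>X\<in>Xs. \<forall>s t. t < s \<longrightarrow> s \<le> T \<longrightarrow>
             (AE \<omega> in M. phi s X \<omega> \<le> 0) \<longrightarrow> (AE \<omega> in M. phi t X \<omega> \<le> 0))))"
proof -
  have uminus_closed: "\<forall>X\<in>Xs. (\<lambda>x. - X x) \<in> Xs"
    unfolding Xs_def by (blast intro: Lspace_uminus)
  have dual_LM: "dynamic_LM_measure M F T Xs (dual_measure phi)"
    by (rule dynamic_LM_measure_dual[OF uminus_closed LM])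
  have Essinf: "weakly_acceptance_tc M F T Xs psi \<longleftrightarrow> acceptance_tc_Essinf M F T Xs psi"
    and Ft: "weakly_acceptance_tc M F T Xs psi \<longleftrightarrow> acceptance_tc_Ft M F T Xs psi"
    if "dynamic_LM_measure M F T Xs psi" for psi
    using weakly_acceptance_tc_iff_Essinf[OF assms(2,3) dynamic_LM_measure_adapted[OF that]]
      acceptance_tc_Essinf_iff_Ft[OF assms(2,3) dynamic_LM_measure_adapted[OF that]] by simp_all
  have zero: "weakly_acceptance_tc M F T Xs psi \<longleftrightarrow> acceptance_tc_zero M T Xs psi"
    if "dynamic_monetary_utility_measure M F T Xs psi" for psi
  proof -
    have "dynamic_LM_measure M F T Xs psi"
      using that by (simp add: dynamic_monetary_utility_measure_def)
    then show ?thesis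
      using Ft acceptance_tc_zero_imp_Ft[OF assms(2,3)] acceptance_tc_Ft_imp_zero that
      unfolding Xs_def by blast
  qed
  note rejection_iff_dual = weakly_rejection_tc_iff_dual[OF uminus_closed]
    rejection_tc_Esssup_iff_dual[OF uminus_closed] rejection_tc_Ft_iff_dual[OF uminus_closed]
    rejection_tc_zero_iff_dual[OF uminus_closed]
  show ?thesis
    unfolding acceptance_tc_Essinf_def[symmetric] acceptance_tc_Ft_def[symmetric]
      acceptance_tc_zero_def[symmetric] rejection_tc_Esssup_def[symmetric]
      rejection_tc_Ft_def[symmetric] rejection_tc_zero_def[symmetric]
  proof (intro conjI impI)
    show "weakly_acceptance_tc M F T Xs phi \<longleftrightarrow> acceptance_tc_Essinf M F T Xs phi"
      and "weakly_acceptance_tc M F T Xs phi \<longleftrightarrow> acceptance_tc_Ft M F T Xs phi"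
      using Essinf[OF LM] Ft[OF LM] .
    show "weakly_rejection_tc M F T Xs phi \<longleftrightarrow> rejection_tc_Esssup M F T Xs phi"
      and "weakly_rejection_tc M F T Xs phi \<longleftrightarrow> rejection_tc_Ft M F T Xs phi"
      unfolding rejection_iff_dual using Essinf[OF dual_LM] Ft[OF dual_LM] .
    assume monetary: "dynamic_monetary_utility_measure M F T Xs phi"
    show "weakly_acceptance_tc M F T Xs phi \<longleftrightarrow> acceptance_tc_zero M T Xs phi"
      using zero[OF monetary] .
    show "weakly_rejection_tc M F T Xs phi \<longleftrightarrow> rejection_tc_zero M T Xs phi"
      unfolding rejection_iff_dual
      using zero[OF dynamic_monetary_utility_measure_dual[OF uminus_closed monetary]] .
  qed
qed

end
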